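(* Let $d,d'\in\mathcal D$ with quantities $(\mathbf P,\mathbf r,\boldsymbol\pi,J_\mu,\mathbf g)$ for $d$ and $(\mathbf P',\mathbf r')$ for $d'$. The function $\delta\mapsto J^\delta_{\mu,\sigma}$ (combined metric of the mixed policy $d^{\delta,d'}$) is differentiable at $\delta=0$ (from the right), with $$\frac{\mathrm d J^\delta_{\mu,\sigma}}{\mathrm d\delta}\Big|_{\delta=0}=\boldsymbol\pi\Big[(\mathbf P'-\mathbf P)\mathbf g+\mathbf r'-\beta(\mathbf r'-J_\mu\mathbf 1)^2_\odot-\mathbf r+\beta(\mathbf r-J_\mu\mathbf 1)^2_\odot\Big].$$
   Context: Let $\mathcal S=\{1,\dots,S\}$ be a finite state space and $\mathcal A$ a finite action set, with transition probabilities $p^a(i,j)$ ($\sum_j p^a(i,j)=1$) and rewards $r(i,a)\in\mathbb R$. A deterministic stationary policy is a map $d:\mathcal S\to\mathcal A$; $\mathcal D$ is the set of these; $\mathbf P^d$ has entries $p^{d(i)}(i,j)$ and $\mathbf r^d$ has entries $r(i,d(i))$. Standing assumption: every $\mathbf P^d$, $d\in\mathcal D$, is irreducible. For $d$: $\boldsymbol\pi^d$ is the unique stationary distribution (row vector, all entries positive), $J^d_\mu=\boldsymbol\pi^d\mathbf r^d$, and for fixed $\beta>0$, $J^d_{\mu,\sigma}=\boldsymbol\pi^d\mathbf f^d$ with $f^d(i)=r(i,d(i))-\beta(r(i,d(i))-J^d_\mu)^2$; $\mathbf g^d$ is any solution of $\mathbf g^d=\mathbf f^d-J^d_{\mu,\sigma}\mathbf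 1+\mathbf P^d\mathbf g^d$. Mixed policy: for $d,d'\in\mathcal D$ and $\delta\in[0,1]$, $d^{\delta,d'}$ is the randomized stationary policy which at each visit to state $i$ independently takes action $d(i)$ with probability $1-\delta$ and $d'(i)$ with probability $\delta$. Its transition matrix is $\mathbf P^\delta=\mathbf P+\delta(\mathbf P'-\mathbf P)$ (irreducible, with unique positive stationary distribution $\boldsymbol\pi^\delta$), its mean is $J^\delta_\mu=\boldsymbol\pi^\delta[\mathbf r+\delta(\mathbf r'-\mathbf r)]$, and its combined metric is $J^\delta_{\mu,\sigma}=\boldsymbol\pi^\delta\mathbf f^\delta$ with $f^\delta(i)=(1-\delta)[r(i)-\beta(r(i)-J^\delta_\mu)^2]+\delta[r'(i)-\beta(r'(i)-J^\delta_\mu)^2]$. For a vector $\mathbf v$, $(\mathbf v)^2_\odot$ is its componentwise square. *)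

theory Defs
  imports Complex_Main
begin

definition stochastic :: "('s::finite \<Rightarrow> 's \<Rightarrow> real) \<Rightarrow> bool" where
  "stochastic M \<longleftrightarrow> (\<forall>i j. M i j \<ge> 0) \<and> (\<forall>i. (\<Sum>j\<in>UNIV. M i j) = 1)"

definition irreducible_mat :: "('s::finite \<Rightarrow> 's \<Rightarrow> real) \<Rightarrow> bool" where
  "irreducible_mat M \<longleftrightarrow> (\<forall>i j. (i, j) \<in> {(i, j). M i j > 0}\<^sup>*)"

definition stationary :: "('s::finite \<Rightarrow> 's \<Rightarrow> real) \<Rightarrow> ('s \<Rightarrow> real) \<Rightarrow> bool" where
  "stationary M \<pi> \<longleftrightarrow> (\<forall>j. \<pi> j \<ge> 0) \<and> (\<Sum>j\<in>UNIV. \<pi> j) = 1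
      \<and> (\<forall>j. (\<Sum>i\<in>UNIV. \<pi> i * M i j) = \<pi> j)"

text \<open>The (unique, under irreducibility) stationary distribution.\<close>
definition stat_dist :: "('s::finite \<Rightarrow> 's \<Rightarrow> real) \<Rightarrow> 's \<Rightarrow> real" where
  "stat_dist M = (THE \<pi>. stationary M \<pi>)"

definition Pmat :: "('a \<Rightarrow> 's \<Rightarrow> 's \<Rightarrow> real) \<Rightarrow> ('s \<Rightarrow> 'a) \<Rightarrow> 's \<Rightarrow> 's \<Rightarrow> real" where
  "Pmat p d = (\<lambda>i j. p (d i) i j)"

definition J_mu :: "('a \<Rightarrow> 's::finite \<Rightarrow> 's \<Rightarrow> real) \<Rightarrow> ('s \<Rightarrow> 'a \<Rightarrow> real) \<Rightarrow> ('s \<Rightarrow> 'a) \<Rightarrow> real" where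
  "J_mu p r d = (\<Sum>i\<in>UNIV. stat_dist (Pmat p d) i * r i (d i))"

definition f_vec :: "real \<Rightarrow> ('a \<Rightarrow> 's::finite \<Rightarrow> 's \<Rightarrow> real) \<Rightarrow> ('s \<Rightarrow> 'a \<Rightarrow> real) \<Rightarrow> ('s \<Rightarrow> 'a) \<Rightarrow> 's \<Rightarrow> real" where
  "f_vec \<beta> p r d = (\<lambda>i. r i (d i) - \<beta> * (r i (d i) - J_mu p r d)\<^sup>2)"

definition J_ms :: "real \<Rightarrow> ('a \<Rightarrow> 's::finite \<Rightarrow> 's \<Rightarrow> real) \<Rightarrow> ('s \<Rightarrow> 'a \<Rightarrow> real) \<Rightarrow> ('s \<Rightarrow> 'a) \<Rightarrow> real" where
  "J_ms \<beta> p r d = (\<Sum>i\<in>UNIV. stat_dist (Pmat p d) i * f_vec \<beta> p r d i)"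

definition mixP :: "('a \<Rightarrow> 's \<Rightarrow> 's \<Rightarrow> real) \<Rightarrow> ('s \<Rightarrow> 'a) \<Rightarrow> ('s \<Rightarrow> 'a) \<Rightarrow> real \<Rightarrow> 's \<Rightarrow> 's \<Rightarrow> real" where
  "mixP p d d' \<delta> = (\<lambda>i j. p (d i) i j + \<delta> * (p (d' i) i j - p (d i) i j))"

definition mix_mu :: "('a \<Rightarrow> 's::finite \<Rightarrow> 's \<Rightarrow> real) \<Rightarrow> ('s \<Rightarrow> 'a \<Rightarrow> real) \<Rightarrow> ('s \<Rightarrow> 'a) \<Rightarrow> ('s \<Rightarrow> 'a) \<Rightarrow> real \<Rightarrow> real" where
  "mix_mu p r d d' \<delta> =
     (\<Sum>i\<in>UNIV. stat_dist (mixP p d d' \<delta>) i * (r i (d i) + \<delta> * (r i (d' i) - r i (d i))))"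

definition mix_ms :: "real \<Rightarrow> ('a \<Rightarrow> 's::finite \<Rightarrow> 's \<Rightarrow> real) \<Rightarrow> ('s \<Rightarrow> 'a \<Rightarrow> real) \<Rightarrow> ('s \<Rightarrow> 'a) \<Rightarrow> ('s \<Rightarrow> 'a) \<Rightarrow> real \<Rightarrow> real" where
  "mix_ms \<beta> p r d d' \<delta> =
     (let J = mix_mu p r d d' \<delta> in
      \<Sum>i\<in>UNIV. stat_dist (mixP p d d' \<delta>) i *
        ((1 - \<delta>) * (r i (d i) - \<beta> * (r i (d i) - J)\<^sup>2)
         + \<delta> * (r i (d' i) - \<beta> * (r i (d' i) - J)\<^sup>2)))"

end

theory Submission
  imports Defs "HOL-Analysis.Analysis"
begin

text \<open>Write \<open>\<rho>\<^sub>\<delta>\<close> for the stationary distribution of \<open>P\<^sub>\<delta> = P + \<delta> (P' - P)\<close> and \<open>\<pi> = \<rho>\<^sub>0\<close>.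
  Stationarity of both gives \<open>(\<rho>\<^sub>\<delta> - \<pi>)(I - P) = \<delta> \<rho>\<^sub>\<delta> (P' - P)\<close>. Irreducibility makes the
  invariant vectors of \<open>P\<close> one-dimensional, so \<open>I - P\<close> is injective, hence bounded below, on
  vectors of total mass zero; therefore \<open>\<rho>\<^sub>\<delta> - \<pi> = O(\<delta>)\<close> and \<open>J\<^sup>\<delta>\<^sub>\<mu> - J\<^sub>\<mu> = O(\<delta>)\<close>.
  Pairing \<open>\<rho>\<^sub>\<delta> - \<pi>\<close> with the Poisson equation \<open>g = f - J\<^sub>\<mu>\<^sub>\<sigma> + P g\<close> turns the change of the
  combined metric caused by the change of distribution into \<open>\<delta> \<rho>\<^sub>\<delta> (P' - P) g\<close>. Moving the mean
  inside the squares costs \<open>\<beta> (J\<^sup>\<delta>\<^sub>\<mu> - J\<^sub>\<mu>)(2 \<rho>\<^sub>\<delta> r - J\<^sup>\<delta>\<^sub>\<mu> - J\<^sub>\<mu>)\<close>, a product of an \<open>O(\<delta>)\<close> and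
  an \<open>o(1)\<close> term, so it does not contribute to the derivative.\<close>

section \<open>Stationary distributions of irreducible chains\<close>

lemma stationary_le_one:
  assumes "stationary M \<pi>"
  shows "\<pi> i \<le> 1"
proof -
  have "\<pi> i \<le> (\<Sum>j\<in>UNIV. \<pi> j)"
    using assms by (intro member_le_sum) (auto simp: stationary_def)
  then show ?thesis
    using assms by (simp add: stationary_def)
qed

lemma invariant_nonneg_vanishes:
  fixes M :: "'s::finite \<Rightarrow> 's \<Rightarrow> real"
  assumes M_nonneg: "\<And>i j. M i j \<ge> 0" and irr: "irreducible_mat M"
    and y_nonneg: "\<And>i. y i \<ge> 0" and inv: "\<And>j. (\<Sum>i\<in>UNIV. y i * M i j) = y j"
    and "y k = 0"
  shows "y i = 0"
proof -
  have "(i, k) \<in> {(i, j). M i j > 0}\<^sup>*"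
    using irr unfolding irreducible_mat_def by blast
  then show ?thesis
  proof (induction rule: converse_rtrancl_induct)
    case base
    show ?case using \<open>y k = 0\<close> .
  next
    case (step a b)
    have "(\<Sum>i\<in>UNIV. y i * M i b) = 0"
      using inv[of b] step.IH by simp
    then have "y a * M a b = 0"
      by (subst (asm) sum_nonneg_eq_0_iff) (auto simp: y_nonneg M_nonneg)
    with step.hyps show ?case by auto
  qed
qed

lemma stationary_pos:
  fixes M :: "'s::finite \<Rightarrow> 's \<Rightarrow> real"
  assumes "\<And>i j. M i j \<ge> 0" "irreducible_mat M" "stationary M \<pi>"
  shows "\<pi> i > 0"
proof (rule ccontr)
  assume "\<not> \<pi> i > 0"
  with assms(3) have "\<pi> i = 0"
    unfolding stationary_def by (meson not_less order_antisym)
  then have "\<pi> j = 0" for j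
    using invariant_nonneg_vanishes[OF assms(1,2)] assms(3) unfolding stationary_def by blast
  then show False
    using assms(3) by (simp add: stationary_def)
qed

text \<open>Subtracting the largest multiple of \<open>\<pi>\<close> that stays below \<open>x\<close> leaves a nonnegative
  invariant vector with a zero entry, which must vanish.\<close>
lemma invariant_eq_sum_times_stationary:
  fixes M :: "'s::finite \<Rightarrow> 's \<Rightarrow> real"
  assumes M_nonneg: "\<And>i j. M i j \<ge> 0" and irr: "irreducible_mat M" and st: "stationary M \<pi>"
    and inv: "\<And>j. (\<Sum>i\<in>UNIV. x i * M i j) = x j"
  shows "x i = (\<Sum>k\<in>UNIV. x k) * \<pi> i"
proof -
  have \<pi>_pos: "\<pi> i > 0" for i
    using stationary_pos[OF M_nonneg irr st] .
  define c where "c = Min (range (\<lambda>i. x i / \<pi> i))"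
  have "c \<in> range (\<lambda>i. x i / \<pi> i)"
    unfolding c_def by (intro Min_in) auto
  then obtain k where c_eq: "c = x k / \<pi> k"
    by blast
  have c_le: "c \<le> x i / \<pi> i" for i
    unfolding c_def by (intro Min_le) auto
  define z where "z i = x i - c * \<pi> i" for i
  have z_nonneg: "z i \<ge> 0" for i
    using c_le[of i] \<pi>_pos[of i] by (simp add: z_def field_simps)
  have z_k: "z k = 0"
    using \<pi>_pos[of k] by (simp add: z_def c_eq)
  have z_inv: "(\<Sum>i\<in>UNIV. z i * M i j) = z j" for j
    using inv[of j] st
    by (simp add: z_def stationary_def left_diff_distrib sum_subtractf mult.assoc
        flip: sum_distrib_left)
  have "z i = 0" for i
    using invariant_nonneg_vanishes[OF M_nonneg irr, of z] z_nonneg z_inv z_k by blast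
  then have x_eq: "x i = c * \<pi> i" for i
    by (simp add: z_def)
  moreover have "(\<Sum>k\<in>UNIV. x k) = c"
    using st by (simp add: x_eq stationary_def flip: sum_distrib_left)
  ultimately show ?thesis by simp
qed

lemma stationary_unique:
  fixes M :: "'s::finite \<Rightarrow> 's \<Rightarrow> real"
  assumes "\<And>i j. M i j \<ge> 0" "irreducible_mat M" "stationary M \<pi>" "stationary M \<rho>"
  shows "\<rho> = \<pi>"
proof
  fix i
  show "\<rho> i = \<pi> i"
    using invariant_eq_sum_times_stationary[OF assms(1-3), of \<rho> i] assms(4)
    by (simp add: stationary_def)
qed

lemma stationary_exists:
  fixes M :: "'s::finite \<Rightarrow> 's \<Rightarrow> real"
  assumes "stochastic M"
  obtains \<pi> where "stationary M \<pi>"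
proof -
  have M_nonneg: "M i j \<ge> 0" and row_sum: "(\<Sum>j\<in>UNIV. M i j) = 1" for i j
    using assms unfolding stochastic_def by auto
  define S where "S = {v::real^'s. (\<forall>i. 0 \<le> v$i) \<and> (\<Sum>i\<in>UNIV. v$i) = 1}"
  define f where "f v = (\<chi> j. \<Sum>i\<in>UNIV. v$i * M i j)" for v :: "real^'s"
  have "bounded S"
    unfolding bounded_iff
  proof (intro exI ballI)
    fix v assume "v \<in> S"
    then show "norm v \<le> 1"
      using norm_le_l1_cart[of v] by (simp add: S_def)
  qed
  moreover have "closed S"
    unfolding S_def Collect_conj_eq
    by (intro closed_Int closed_Collect_all closed_Collect_le closed_Collect_eq
        continuous_on_sum continuous_on_component continuous_on_const continuous_on_id)
  ultimately have "compact S"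
    by (simp add: compact_eq_bounded_closed)
  moreover have "convex S"
    unfolding S_def convex_def
    by (simp add: sum.distrib flip: sum_distrib_left)
  moreover have "S \<noteq> {}"
  proof -
    have "axis undefined 1 \<in> S"
      by (simp add: S_def axis_def)
    then show ?thesis by blast
  qed
  moreover have "continuous_on S f"
    unfolding f_def by (intro continuous_intros)
  moreover have "f \<in> S \<rightarrow> S"
  proof
    fix v assume v: "v \<in> S"
    have "(\<Sum>j\<in>UNIV. \<Sum>i\<in>UNIV. v$i * M i j) = (\<Sum>i\<in>UNIV. v$i * (\<Sum>j\<in>UNIV. M i j))"
      by (subst sum.swap) (simp add: sum_distrib_left)
    then show "f v \<in> S"
      using v by (simp add: S_def f_def row_sum M_nonneg sum_nonneg)
  qed
  ultimately obtain v where "v \<in> S" "f v = v"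
    by (rule brouwer)
  then have "stationary M (\<lambda>i. v$i)"
    by (simp add: stationary_def S_def f_def vec_eq_iff)
  then show thesis ..
qed

lemma stationary_stat_dist:
  fixes M :: "'s::finite \<Rightarrow> 's \<Rightarrow> real"
  assumes "stochastic M" "irreducible_mat M"
  shows "stationary M (stat_dist M)"
proof -
  obtain \<pi> where st: "stationary M \<pi>"
    using stationary_exists[OF assms(1)] .
  have "M i j \<ge> 0" for i j
    using assms(1) unfolding stochastic_def by auto
  then have "stat_dist M = \<pi>"
    unfolding stat_dist_def using stationary_unique[OF _ assms(2) st] st by blast
  with st show ?thesis by simp
qed

text \<open>The map \<open>v \<mapsto> v - v M + (\<Sum>v) \<pi>\<close> is linear and injective: summing its entries recovers
  \<open>\<Sum>v\<close>, and an invariant vector of sum zero vanishes. Hence it is bounded below, and on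
  vectors of sum zero it coincides with \<open>v \<mapsto> v - v M\<close>.\<close>
lemma sum_zero_le_invariance_defect:
  fixes M :: "'s::finite \<Rightarrow> 's \<Rightarrow> real"
  assumes sto: "stochastic M" and irr: "irreducible_mat M"
  obtains K where "K \<ge> 0" and "\<And>x i. (\<Sum>k\<in>UNIV. x k) = 0 \<Longrightarrow>
    \<bar>x i\<bar> \<le> K * (\<Sum>j\<in>UNIV. \<bar>x j - (\<Sum>k\<in>UNIV. x k * M k j)\<bar>)"
proof -
  have M_nonneg: "M i j \<ge> 0" and row_sum: "(\<Sum>j\<in>UNIV. M i j) = 1" for i j
    using sto unfolding stochastic_def by auto
  obtain \<pi> where st: "stationary M \<pi>"
    using stationary_exists[OF sto] .
  define T where
    "T v = (\<chi> j. v$j - (\<Sum>k\<in>UNIV. v$k * M k j) + (\<Sum>k\<in>UNIV. v$k) * \<pi> j)" for v :: "real^'s"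
  have "linear T"
    by (rule linearI)
      (simp_all add: T_def vec_eq_iff sum.distrib algebra_simps flip: sum_distrib_left)
  moreover have "inj T"
    unfolding linear_inj_iff_eq_0[OF \<open>linear T\<close>]
  proof (intro allI impI)
    fix v assume T0: "T v = 0"
    have "(\<Sum>j\<in>UNIV. T v $ j) = (\<Sum>j\<in>UNIV. v$j) - (\<Sum>j\<in>UNIV. \<Sum>k\<in>UNIV. v$k * M k j)
        + (\<Sum>k\<in>UNIV. v$k) * (\<Sum>j\<in>UNIV. \<pi> j)"
      by (simp add: T_def sum.distrib sum_subtractf sum_distrib_left)
    also have "(\<Sum>j\<in>UNIV. \<Sum>k\<in>UNIV. v$k * M k j) = (\<Sum>k\<in>UNIV. v$k)"
      by (subst sum.swap) (simp add: row_sum flip: sum_distrib_left)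
    finally have "0 = (\<Sum>k\<in>UNIV. v$k)"
      using st by (simp add: T0 stationary_def)
    then have sum_v: "(\<Sum>k\<in>UNIV. v$k) = 0" ..
    have "(\<Sum>k\<in>UNIV. v$k * M k j) = v$j" for j
    proof -
      have "T v $ j = 0"
        by (simp add: T0)
      then show ?thesis
        by (simp add: T_def sum_v)
    qed
    then have "v$i = (\<Sum>k\<in>UNIV. v$k) * \<pi> i" for i
      by (rule invariant_eq_sum_times_stationary[OF M_nonneg irr st])
    then have "v$i = 0" for i
      by (simp add: sum_v)
    then show "v = 0"
      by (simp add: vec_eq_iff)
  qed
  ultimately obtain B where B_pos: "B > 0" and B: "\<And>v. B * norm v \<le> norm (T v)"
    using linear_inj_bounded_below_pos by blast
  show thesis
  proof
    show "1 / B \<ge> 0"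
      using B_pos by simp
    fix x :: "'s \<Rightarrow> real" and i assume sum_x: "(\<Sum>k\<in>UNIV. x k) = 0"
    have Tx: "T (vec_lambda x) $ j = x j - (\<Sum>k\<in>UNIV. x k * M k j)" for j
      by (simp add: T_def sum_x)
    have "B * \<bar>x i\<bar> \<le> B * norm (vec_lambda x)"
      using component_le_norm_cart[of "vec_lambda x" i] B_pos by simp
    also have "\<dots> \<le> norm (T (vec_lambda x))"
      by (rule B)
    also have "\<dots> \<le> (\<Sum>j\<in>UNIV. \<bar>x j - (\<Sum>k\<in>UNIV. x k * M k j)\<bar>)"
      using norm_le_l1_cart[of "T (vec_lambda x)"] by (simp add: Tx)
    finally show "\<bar>x i\<bar> \<le> 1 / B * (\<Sum>j\<in>UNIV. \<bar>x j - (\<Sum>k\<in>UNIV. x k * M k j)\<bar>)"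
      using B_pos by (simp add: field_simps)
  qed
qed

section \<open>Perturbing the transition matrix\<close>

definition mix_mat :: "('s \<Rightarrow> 's \<Rightarrow> real) \<Rightarrow> ('s \<Rightarrow> 's \<Rightarrow> real) \<Rightarrow> real \<Rightarrow> 's \<Rightarrow> 's \<Rightarrow> real" where
  "mix_mat M M' \<delta> = (\<lambda>i j. M i j + \<delta> * (M' i j - M i j))"

lemma mix_mat_0 [simp]: "mix_mat M M' 0 = M"
  by (simp add: mix_mat_def)

lemma mix_mat_1 [simp]: "mix_mat M M' 1 = M'"
  by (simp add: mix_mat_def)

lemma mix_mat_convex: "mix_mat M M' \<delta> i j = (1 - \<delta>) * M i j + \<delta> * M' i j"
  by (simp add: mix_mat_def algebra_simps)

lemma stochastic_mix_mat:
  assumes "stochastic M" "stochastic M'" "0 \<le> \<delta>" "\<delta> \<le> 1"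
  shows "stochastic (mix_mat M M' \<delta>)"
  using assms unfolding stochastic_def mix_mat_convex
  by (simp add: sum.distrib flip: sum_distrib_left)

lemma irreducible_mix_mat:
  assumes M: "irreducible_mat M" and M': "irreducible_mat M'" "\<And>i j. M' i j \<ge> 0"
    and "0 \<le> \<delta>" "\<delta> \<le> 1"
  shows "irreducible_mat (mix_mat M M' \<delta>)"
proof (cases "\<delta> = 1")
  case True
  with M' show ?thesis by simp
next
  case False
  with assms have "{(i, j). M i j > 0} \<subseteq> {(i, j). mix_mat M M' \<delta> i j > 0}"
    by (auto simp: mix_mat_convex intro: add_pos_nonneg)
  with M show ?thesis
    unfolding irreducible_mat_def using rtrancl_mono by blast
qed

lemma stationary_mix_mat_defect:
  assumes "stationary M \<pi>" "stationary (mix_mat M M' \<delta>) \<rho>"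
  shows "(\<rho> j - \<pi> j) - (\<Sum>i\<in>UNIV. (\<rho> i - \<pi> i) * M i j) = \<delta> * (\<Sum>i\<in>UNIV. \<rho> i * (M' i j - M i j))"
proof -
  have "\<rho> j = (\<Sum>i\<in>UNIV. \<rho> i * mix_mat M M' \<delta> i j)"
    using assms(2) by (simp add: stationary_def)
  also have "\<dots> = (\<Sum>i\<in>UNIV. \<rho> i * M i j) + \<delta> * (\<Sum>i\<in>UNIV. \<rho> i * (M' i j - M i j))"
    by (simp add: mix_mat_def distrib_left sum.distrib mult.left_commute[of "\<rho> _" \<delta>]
        flip: sum_distrib_left)
  finally have "\<rho> j = \<dots>" .
  moreover have "(\<Sum>i\<in>UNIV. \<pi> i * M i j) = \<pi> j"
    using assms(1) by (simp add: stationary_def)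
  ultimately show ?thesis
    by (simp add: left_diff_distrib sum_subtractf)
qed

lemma stationary_mix_mat_lipschitz:
  fixes M :: "'s::finite \<Rightarrow> 's \<Rightarrow> real"
  assumes "stochastic M" "irreducible_mat M" "stationary M \<pi>"
  obtains L where "\<And>\<delta> \<rho> i. 0 \<le> \<delta> \<Longrightarrow> stationary (mix_mat M M' \<delta>) \<rho> \<Longrightarrow> \<bar>\<rho> i - \<pi> i\<bar> \<le> L * \<delta>"
proof -
  obtain K where K_nonneg: "K \<ge> 0" and K: "\<And>x i. (\<Sum>k\<in>UNIV. x k) = 0 \<Longrightarrow>
      \<bar>x i\<bar> \<le> K * (\<Sum>j\<in>UNIV. \<bar>x j - (\<Sum>k\<in>UNIV. x k * M k j)\<bar>)"
    using sum_zero_le_invariance_defect[OF assms(1,2)] by blast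
  define C where "C = (\<Sum>j\<in>UNIV. \<Sum>i\<in>UNIV. \<bar>M' i j - M i j\<bar>)"
  show thesis
  proof
    fix \<delta> \<rho> i
    assume \<delta>: "0 \<le> \<delta>" and st: "stationary (mix_mat M M' \<delta>) \<rho>"
    have "(\<Sum>k\<in>UNIV. \<rho> k - \<pi> k) = 0"
      using st assms(3) by (simp add: stationary_def sum_subtractf)
    then have "\<bar>\<rho> i - \<pi> i\<bar> \<le> K * (\<Sum>j\<in>UNIV. \<bar>\<delta> * (\<Sum>k\<in>UNIV. \<rho> k * (M' k j - M k j))\<bar>)"
      using K[of "\<lambda>k. \<rho> k - \<pi> k" i] stationary_mix_mat_defect[OF assms(3) st] by simp
    also have "\<dots> \<le> K * (\<delta> * C)"
    proof (intro mult_left_mono K_nonneg)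
      have "\<bar>\<rho> k * (M' k j - M k j)\<bar> \<le> \<bar>M' k j - M k j\<bar>" for k j
        using st stationary_le_one[OF st, of k]
        by (auto simp: stationary_def abs_mult intro: mult_left_le_one_le)
      then have "\<bar>\<Sum>k\<in>UNIV. \<rho> k * (M' k j - M k j)\<bar> \<le> (\<Sum>k\<in>UNIV. \<bar>M' k j - M k j\<bar>)" for j
        by (rule order_trans[OF sum_abs sum_mono])
      then have "(\<Sum>j\<in>UNIV. \<bar>\<Sum>k\<in>UNIV. \<rho> k * (M' k j - M k j)\<bar>) \<le> C"
        unfolding C_def by (rule sum_mono)
      then show "(\<Sum>j\<in>UNIV. \<bar>\<delta> * (\<Sum>k\<in>UNIV. \<rho> k * (M' k j - M k j))\<bar>) \<le> \<delta> * C"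
        using \<delta> by (simp add: abs_mult mult_left_mono flip: sum_distrib_left)
    qed
    finally show "\<bar>\<rho> i - \<pi> i\<bar> \<le> K * C * \<delta>"
      by (simp add: algebra_simps)
  qed
qed

lemma sum_weighted_square_diff:
  fixes \<rho> R :: "'s::finite \<Rightarrow> real"
  assumes "(\<Sum>i\<in>UNIV. \<rho> i) = 1"
  shows "(\<Sum>i\<in>UNIV. \<rho> i * ((R i - a)\<^sup>2 - (R i - b)\<^sup>2)) = (b - a) * (2 * (\<Sum>i\<in>UNIV. \<rho> i * R i) - a - b)"
proof -
  have "(\<Sum>i\<in>UNIV. \<rho> i * ((R i - a)\<^sup>2 - (R i - b)\<^sup>2))
      = (\<Sum>i\<in>UNIV. (b - a) * (2 * (\<rho> i * R i) - (a + b) * \<rho> i))"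
    by (intro sum.cong) (simp_all add: power2_eq_square algebra_simps)
  also have "\<dots> = (b - a) * (2 * (\<Sum>i\<in>UNIV. \<rho> i * R i) - (a + b) * (\<Sum>i\<in>UNIV. \<rho> i))"
    by (simp add: sum_distrib_left sum_subtractf right_diff_distrib)
  finally show ?thesis
    using assms by (simp add: algebra_simps)
qed

lemma sum_poisson_solution:
  fixes e f g :: "'s::finite \<Rightarrow> real"
  assumes "(\<Sum>i\<in>UNIV. e i) = 0" and "\<And>i. g i = f i - c + (\<Sum>j\<in>UNIV. M i j * g j)"
  shows "(\<Sum>i\<in>UNIV. e i * f i) = (\<Sum>j\<in>UNIV. (e j - (\<Sum>i\<in>UNIV. e i * M i j)) * g j)"
proof -
  have "e i * f i = e i * g i + c * e i - (\<Sum>j\<in>UNIV. e i * M i j * g j)" for i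
  proof -
    have "f i = g i + c - (\<Sum>j\<in>UNIV. M i j * g j)"
      using assms(2)[of i] by linarith
    then show ?thesis
      by (simp only:) (simp add: algebra_simps sum_distrib_left)
  qed
  then have "(\<Sum>i\<in>UNIV. e i * f i)
      = (\<Sum>i\<in>UNIV. e i * g i) + c * (\<Sum>i\<in>UNIV. e i) - (\<Sum>i\<in>UNIV. \<Sum>j\<in>UNIV. e i * M i j * g j)"
    by (simp add: sum.distrib sum_subtractf sum_distrib_left)
  also have "(\<Sum>i\<in>UNIV. \<Sum>j\<in>UNIV. e i * M i j * g j) = (\<Sum>j\<in>UNIV. (\<Sum>i\<in>UNIV. e i * M i j) * g j)"
    by (subst sum.swap) (simp add: sum_distrib_right)
  finally show ?thesis
    using assms(1) by (simp add: left_diff_distrib sum_subtractf)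
qed

lemma tendsto_at_0_of_lipschitz:
  fixes f :: "real \<Rightarrow> real"
  assumes "\<And>\<delta>. \<delta> \<in> {0..1} \<Longrightarrow> \<bar>f \<delta> - c\<bar> \<le> L * \<delta>"
  shows "(f \<longlongrightarrow> c) (at 0 within {0..1})"
proof -
  have "((\<lambda>\<delta>. f \<delta> - c) \<longlongrightarrow> 0) (at 0 within {0..1})"
  proof (rule Lim_null_comparison)
    show "eventually (\<lambda>\<delta>. norm (f \<delta> - c) \<le> L * \<delta>) (at 0 within {0..1})"
      using assms by (auto simp: eventually_at_filter)
    show "((\<lambda>\<delta>. L * \<delta>) \<longlongrightarrow> 0) (at 0 within {0..1})"
      by (intro tendsto_eq_intros) auto
  qed
  then show ?thesis
    by (simp add: Lim_null[symmetric])
qed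

section \<open>The mixed policy\<close>

lemma mixP_eq_mix_mat: "mixP p d d' \<delta> = mix_mat (Pmat p d) (Pmat p d') \<delta>"
  by (simp add: mixP_def mix_mat_def Pmat_def)

lemma stochastic_Pmat: "(\<And>a. stochastic (p a)) \<Longrightarrow> stochastic (Pmat p d)"
  by (simp add: stochastic_def Pmat_def)

lemma stationary_stat_dist_mixP:
  assumes "\<And>a. stochastic (p a)" and "\<And>e. irreducible_mat (Pmat p e)" and "\<delta> \<in> {0..1}"
  shows "stationary (mixP p d d' \<delta>) (stat_dist (mixP p d d' \<delta>))"
proof -
  have "stochastic (Pmat p e)" for e
    using assms(1) by (rule stochastic_Pmat)
  then show ?thesis
    unfolding mixP_eq_mix_mat using assms(2,3)
    by (intro stationary_stat_dist stochastic_mix_mat irreducible_mix_mat)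
      (auto simp: stochastic_def)
qed

lemma stat_dist_mixP_lipschitz:
  assumes "\<And>a. stochastic (p a)" and "\<And>e. irreducible_mat (Pmat p e)"
  obtains L where "\<And>\<delta> i. \<delta> \<in> {0..1} \<Longrightarrow>
    \<bar>stat_dist (mixP p d d' \<delta>) i - stat_dist (Pmat p d) i\<bar> \<le> L * \<delta>"
proof -
  have "stationary (Pmat p d) (stat_dist (Pmat p d))"
    using stationary_stat_dist_mixP[OF assms, of 0 d d'] by (simp add: mixP_eq_mix_mat)
  then obtain L where L: "\<And>(\<delta>::real) \<rho> i. 0 \<le> \<delta> \<Longrightarrow> stationary (mixP p d d' \<delta>) \<rho> \<Longrightarrow>
      \<bar>\<rho> i - stat_dist (Pmat p d) i\<bar> \<le> L * \<delta>"
    using stationary_mix_mat_lipschitz[OF stochastic_Pmat[OF assms(1)] assms(2)]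
    unfolding mixP_eq_mix_mat by blast
  show thesis
  proof (rule that)
    fix \<delta> :: real and i assume "\<delta> \<in> {0..1}"
    then show "\<bar>stat_dist (mixP p d d' \<delta>) i - stat_dist (Pmat p d) i\<bar> \<le> L * \<delta>"
      using L stationary_stat_dist_mixP[OF assms] by simp
  qed
qed

lemma mix_mu_lipschitz:
  assumes "\<And>a. stochastic (p a)" and "\<And>e. irreducible_mat (Pmat p e)"
  obtains C where "\<And>\<delta>. \<delta> \<in> {0..1} \<Longrightarrow> \<bar>mix_mu p r d d' \<delta> - J_mu p r d\<bar> \<le> C * \<delta>"
proof -
  define \<rho> where "\<rho> \<delta> = stat_dist (mixP p d d' \<delta>)" for \<delta>
  define \<pi> where "\<pi> = stat_dist (Pmat p d)"
  define R where "R i = r i (d i)" for i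
  define R' where "R' i = r i (d' i)" for i
  obtain L where L: "\<And>\<delta> i. \<delta> \<in> {0..1} \<Longrightarrow> \<bar>\<rho> \<delta> i - \<pi> i\<bar> \<le> L * \<delta>"
    using stat_dist_mixP_lipschitz[OF assms] unfolding \<rho>_def \<pi>_def by blast
  show thesis
  proof
    fix \<delta> :: real assume \<delta>: "\<delta> \<in> {0..1}"
    have "mix_mu p r d d' \<delta> = (\<Sum>i\<in>UNIV. \<rho> \<delta> i * R i) + \<delta> * (\<Sum>i\<in>UNIV. \<rho> \<delta> i * (R' i - R i))"
      by (simp add: mix_mu_def \<rho>_def R_def R'_def distrib_left sum.distrib
          mult.left_commute[of "stat_dist _ _" \<delta>] flip: sum_distrib_left)
    moreover have "J_mu p r d = (\<Sum>i\<in>UNIV. \<pi> i * R i)"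
      by (simp add: J_mu_def \<pi>_def R_def)
    ultimately have "mix_mu p r d d' \<delta> - J_mu p r d
        = (\<Sum>i\<in>UNIV. (\<rho> \<delta> i - \<pi> i) * R i) + \<delta> * (\<Sum>i\<in>UNIV. \<rho> \<delta> i * (R' i - R i))"
      by (simp add: left_diff_distrib sum_subtractf)
    also have "\<bar>\<dots>\<bar> \<le> (\<Sum>i\<in>UNIV. L * \<delta> * \<bar>R i\<bar>) + \<delta> * (\<Sum>i\<in>UNIV. \<bar>R' i - R i\<bar>)"
    proof (rule order_trans[OF abs_triangle_ineq add_mono])
      show "\<bar>\<Sum>i\<in>UNIV. (\<rho> \<delta> i - \<pi> i) * R i\<bar> \<le> (\<Sum>i\<in>UNIV. L * \<delta> * \<bar>R i\<bar>)"
        by (rule order_trans[OF sum_abs sum_mono])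
          (simp add: abs_mult mult_right_mono L[OF \<delta>])
      have "\<bar>\<rho> \<delta> i * (R' i - R i)\<bar> \<le> \<bar>R' i - R i\<bar>" for i
        using stationary_stat_dist_mixP[OF assms \<delta>]
          stationary_le_one[OF stationary_stat_dist_mixP[OF assms \<delta>]]
        by (auto simp: \<rho>_def stationary_def abs_mult intro: mult_left_le_one_le)
      then have "\<bar>\<Sum>i\<in>UNIV. \<rho> \<delta> i * (R' i - R i)\<bar> \<le> (\<Sum>i\<in>UNIV. \<bar>R' i - R i\<bar>)"
        by (rule order_trans[OF sum_abs sum_mono])
      then show "\<bar>\<delta> * (\<Sum>i\<in>UNIV. \<rho> \<delta> i * (R' i - R i))\<bar> \<le> \<delta> * (\<Sum>i\<in>UNIV. \<bar>R' i - R i\<bar>)"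
        using \<delta> by (simp add: abs_mult mult_left_mono)
    qed
    also have "\<dots> = (L * (\<Sum>i\<in>UNIV. \<bar>R i\<bar>) + (\<Sum>i\<in>UNIV. \<bar>R' i - R i\<bar>)) * \<delta>"
      by (simp add: algebra_simps sum_distrib_left)
    finally show "\<bar>mix_mu p r d d' \<delta> - J_mu p r d\<bar> \<le> \<dots>" .
  qed
qed

lemma tendsto_stat_dist_mixP:
  assumes "\<And>a. stochastic (p a)" and "\<And>e. irreducible_mat (Pmat p e)"
  shows "((\<lambda>\<delta>. stat_dist (mixP p d d' \<delta>) i) \<longlongrightarrow> stat_dist (Pmat p d) i) (at 0 within {0..1})"
proof -
  obtain L where "\<And>\<delta> i. \<delta> \<in> {0..1} \<Longrightarrow>
      \<bar>stat_dist (mixP p d d' \<delta>) i - stat_dist (Pmat p d) i\<bar> \<le> L * \<delta>"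
    using stat_dist_mixP_lipschitz[OF assms, where d=d and d'=d'] by blast
  then show ?thesis
    by (rule tendsto_at_0_of_lipschitz)
qed

lemma tendsto_mix_mu:
  assumes "\<And>a. stochastic (p a)" and "\<And>e. irreducible_mat (Pmat p e)"
  shows "(mix_mu p r d d' \<longlongrightarrow> J_mu p r d) (at 0 within {0..1})"
proof -
  obtain C where "\<And>\<delta>. \<delta> \<in> {0..1} \<Longrightarrow> \<bar>mix_mu p r d d' \<delta> - J_mu p r d\<bar> \<le> C * \<delta>"
    using mix_mu_lipschitz[OF assms, where r=r and d=d and d'=d'] by blast
  then show ?thesis
    by (rule tendsto_at_0_of_lipschitz)
qed

lemma mix_ms_0: "mix_ms \<beta> p r d d' 0 = J_ms \<beta> p r d"
proof -
  have "mixP p d d' 0 = Pmat p d"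
    by (simp add: mixP_eq_mix_mat)
  moreover from this have "mix_mu p r d d' 0 = J_mu p r d"
    by (simp add: mix_mu_def J_mu_def)
  ultimately show ?thesis
    by (simp add: mix_ms_def J_ms_def f_vec_def)
qed

definition grad_vec ::
    "real \<Rightarrow> ('a \<Rightarrow> 's::finite \<Rightarrow> 's \<Rightarrow> real) \<Rightarrow> ('s \<Rightarrow> 'a \<Rightarrow> real) \<Rightarrow> ('s \<Rightarrow> 'a) \<Rightarrow> ('s \<Rightarrow> 'a)
      \<Rightarrow> ('s \<Rightarrow> real) \<Rightarrow> real \<Rightarrow> 's \<Rightarrow> real" where
  "grad_vec \<beta> p r d d' g m i =
     (\<Sum>j\<in>UNIV. (Pmat p d' i j - Pmat p d i j) * g j)
     + r i (d' i) - \<beta> * (r i (d' i) - m)\<^sup>2 - r i (d i) + \<beta> * (r i (d i) - m)\<^sup>2"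

lemma mix_ms_difference_quotient:
  assumes p_stoch: "\<And>a. stochastic (p a)" and irred: "\<And>e. irreducible_mat (Pmat p e)"
    and poisson: "\<And>i. g i = f_vec \<beta> p r d i - J_ms \<beta> p r d + (\<Sum>j\<in>UNIV. Pmat p d i j * g j)"
    and "0 < \<delta>" "\<delta> \<le> 1"
  shows "(mix_ms \<beta> p r d d' \<delta> - J_ms \<beta> p r d) / \<delta> =
      \<beta> * ((mix_mu p r d d' \<delta> - J_mu p r d) / \<delta>)
        * (2 * (\<Sum>i\<in>UNIV. stat_dist (mixP p d d' \<delta>) i * r i (d i)) - mix_mu p r d d' \<delta> - J_mu p r d)
      + (\<Sum>i\<in>UNIV. stat_dist (mixP p d d' \<delta>) i * grad_vec \<beta> p r d d' g (mix_mu p r d d' \<delta>) i)"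
proof -
  define \<rho> where "\<rho> = stat_dist (mixP p d d' \<delta>)"
  define \<pi> where "\<pi> = stat_dist (Pmat p d)"
  define \<mu> where "\<mu> = mix_mu p r d d' \<delta>"
  define J where "J = J_mu p r d"
  define P where "P = Pmat p d"
  define P' where "P' = Pmat p d'"
  define R where "R i = r i (d i)" for i
  define R' where "R' i = r i (d' i)" for i
  define A where "A m i = R i - \<beta> * (R i - m)\<^sup>2" for m i
  define B where "B m i = R' i - \<beta> * (R' i - m)\<^sup>2" for m i
  define X where "X i = (\<Sum>j\<in>UNIV. (P' i j - P i j) * g j)" for i
  have st_\<rho>: "stationary (mix_mat P P' \<delta>) \<rho>"
    using stationary_stat_dist_mixP[OF p_stoch irred] assms(4,5)
    by (simp add: \<rho>_def P_def P'_def mixP_eq_mix_mat)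
  have st_\<pi>: "stationary P \<pi>"
    using stationary_stat_dist_mixP[OF p_stoch irred, of 0 d d']
    by (simp add: \<pi>_def P_def mixP_eq_mix_mat)
  have "mix_ms \<beta> p r d d' \<delta> = (\<Sum>i\<in>UNIV. \<rho> i * ((1 - \<delta>) * A \<mu> i + \<delta> * B \<mu> i))"
    by (simp add: mix_ms_def Let_def \<rho>_def \<mu>_def A_def B_def R_def R'_def)
  also have "\<dots> = (\<Sum>i\<in>UNIV. \<rho> i * A \<mu> i) + \<delta> * (\<Sum>i\<in>UNIV. \<rho> i * (B \<mu> i - A \<mu> i))"
    by (simp add: algebra_simps sum.distrib sum_subtractf sum_distrib_left)
  finally have ms: "mix_ms \<beta> p r d d' \<delta> = \<dots>" .
  have "(\<Sum>i\<in>UNIV. \<rho> i * A \<mu> i) - (\<Sum>i\<in>UNIV. \<rho> i * A J i)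
      = \<beta> * (\<Sum>i\<in>UNIV. \<rho> i * ((R i - J)\<^sup>2 - (R i - \<mu>)\<^sup>2))"
    by (simp add: A_def algebra_simps sum_subtractf sum_distrib_left)
  also have "(\<Sum>i\<in>UNIV. \<rho> i * ((R i - J)\<^sup>2 - (R i - \<mu>)\<^sup>2))
      = (\<mu> - J) * (2 * (\<Sum>i\<in>UNIV. \<rho> i * R i) - J - \<mu>)"
    using st_\<rho> by (intro sum_weighted_square_diff) (simp add: stationary_def)
  finally have shift_mean: "(\<Sum>i\<in>UNIV. \<rho> i * A \<mu> i) - (\<Sum>i\<in>UNIV. \<rho> i * A J i)
      = \<beta> * (\<mu> - J) * (2 * (\<Sum>i\<in>UNIV. \<rho> i * R i) - \<mu> - J)"
    by (simp add: algebra_simps)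
  have mass_zero: "(\<Sum>i\<in>UNIV. \<rho> i - \<pi> i) = 0"
    using st_\<rho> st_\<pi> by (simp add: stationary_def sum_subtractf)
  have A_J: "A J = f_vec \<beta> p r d"
    by (simp add: A_def R_def J_def f_vec_def fun_eq_iff)
  have "(\<Sum>i\<in>UNIV. (\<rho> i - \<pi> i) * A J i)
      = (\<Sum>j\<in>UNIV. ((\<rho> j - \<pi> j) - (\<Sum>i\<in>UNIV. (\<rho> i - \<pi> i) * P i j)) * g j)"
    unfolding A_J P_def by (rule sum_poisson_solution[OF mass_zero poisson])
  also have "\<dots> = \<delta> * (\<Sum>j\<in>UNIV. \<Sum>i\<in>UNIV. \<rho> i * ((P' i j - P i j) * g j))"
    by (simp add: stationary_mix_mat_defect[OF st_\<pi> st_\<rho>] sum_distrib_left sum_distrib_right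
        mult.assoc)
  also have "\<dots> = \<delta> * (\<Sum>i\<in>UNIV. \<rho> i * X i)"
    unfolding X_def by (subst sum.swap) (simp add: sum_distrib_left)
  finally have shift_dist: "(\<Sum>i\<in>UNIV. \<rho> i * A J i) - (\<Sum>i\<in>UNIV. \<pi> i * A J i)
      = \<delta> * (\<Sum>i\<in>UNIV. \<rho> i * X i)"
    by (simp add: left_diff_distrib sum_subtractf)
  have "J_ms \<beta> p r d = (\<Sum>i\<in>UNIV. \<pi> i * A J i)"
    by (simp add: J_ms_def \<pi>_def A_J)
  then have "mix_ms \<beta> p r d d' \<delta> - J_ms \<beta> p r d
      = \<beta> * (\<mu> - J) * (2 * (\<Sum>i\<in>UNIV. \<rho> i * R i) - \<mu> - J)
        + \<delta> * (\<Sum>i\<in>UNIV. \<rho> i * (X i + B \<mu> i - A \<mu> i))"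
    using shift_mean shift_dist
    by (simp add: ms algebra_simps sum.distrib sum_subtractf)
  moreover have "X i + B \<mu> i - A \<mu> i = grad_vec \<beta> p r d d' g \<mu> i" for i
    by (simp add: grad_vec_def X_def A_def B_def R_def R'_def P_def P'_def)
  ultimately show ?thesis
    using \<open>0 < \<delta>\<close> by (simp add: add_divide_distrib \<rho>_def \<mu>_def J_def R_def)
qed

lemma tendsto_mean_correction:
  assumes "\<And>a. stochastic (p a)" and "\<And>e. irreducible_mat (Pmat p e)"
  shows "((\<lambda>\<delta>. \<beta> * ((mix_mu p r d d' \<delta> - J_mu p r d) / \<delta>)
      * (2 * (\<Sum>i\<in>UNIV. stat_dist (mixP p d d' \<delta>) i * r i (d i)) - mix_mu p r d d' \<delta> - J_mu p r d))
      \<longlongrightarrow> 0) (at 0 within {0..1})"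
proof -
  let ?F = "at (0::real) within {0..1}"
  obtain C where C: "\<And>\<delta>. \<delta> \<in> {0..1} \<Longrightarrow> \<bar>mix_mu p r d d' \<delta> - J_mu p r d\<bar> \<le> C * \<delta>"
    using mix_mu_lipschitz[OF assms, where r=r and d=d and d'=d'] by blast
  have "eventually (\<lambda>\<delta>. \<delta> \<in> {0<..1}) ?F"
    by (auto simp: eventually_at_filter)
  then have "eventually (\<lambda>\<delta>. norm (\<beta> * ((mix_mu p r d d' \<delta> - J_mu p r d) / \<delta>)) \<le> \<bar>\<beta>\<bar> * C) ?F"
  proof eventually_elim
    case (elim \<delta>)
    then have "\<bar>mix_mu p r d d' \<delta> - J_mu p r d\<bar> / \<delta> \<le> C"
      using C[of \<delta>] by (simp add: pos_divide_le_eq)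
    then show ?case
      using elim by (simp add: abs_mult mult_left_mono flip: times_divide_eq_right)
  qed
  then have "Bfun (\<lambda>\<delta>. \<beta> * ((mix_mu p r d d' \<delta> - J_mu p r d) / \<delta>)) ?F"
    by (rule BfunI)
  moreover have "((\<lambda>\<delta>. 2 * (\<Sum>i\<in>UNIV. stat_dist (mixP p d d' \<delta>) i * r i (d i))
      - mix_mu p r d d' \<delta> - J_mu p r d) \<longlongrightarrow> 0) ?F"
    by (rule tendsto_eq_intros tendsto_stat_dist_mixP[OF assms, where d=d and d'=d']
        tendsto_mix_mu[OF assms, where r=r and d=d and d'=d'] refl)+
      (simp add: J_mu_def)
  ultimately show ?thesis
    unfolding tendsto_Zfun_iff diff_0_right
    by (rule bounded_bilinear.Bfun_prod_Zfun[OF bounded_bilinear_mult])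
qed

theorem lemma2:
  fixes p :: "'a::finite \<Rightarrow> 's::finite \<Rightarrow> 's \<Rightarrow> real"
    and r :: "'s \<Rightarrow> 'a \<Rightarrow> real"
    and \<beta> :: real
    and d d' :: "'s \<Rightarrow> 'a"
    and g :: "'s \<Rightarrow> real"
  assumes beta_pos: "\<beta> > 0"
    and p_stoch: "\<And>a. stochastic (p a)"
    and irred: "\<And>e :: 's \<Rightarrow> 'a. irreducible_mat (Pmat p e)"
    and poisson: "\<And>i. g i = f_vec \<beta> p r d i - J_ms \<beta> p r d + (\<Sum>j\<in>UNIV. Pmat p d i j * g j)"
  shows "((\<lambda>\<delta>. mix_ms \<beta> p r d d' \<delta>) has_real_derivative
           (\<Sum>i\<in>UNIV. stat_dist (Pmat p d) i *
              ((\<Sum>j\<in>UNIV. (Pmat p d' i j - Pmat p d i j) * g j)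
               + r i (d' i) - \<beta> * (r i (d' i) - J_mu p r d)\<^sup>2
               - r i (d i) + \<beta> * (r i (d i) - J_mu p r d)\<^sup>2)))
         (at 0 within {0..1})"
proof -
  let ?F = "at (0::real) within {0..1}"
  let ?D = "\<Sum>i\<in>UNIV. stat_dist (Pmat p d) i * grad_vec \<beta> p r d d' g (J_mu p r d) i"
  have grad_term: "((\<lambda>\<delta>. \<Sum>i\<in>UNIV. stat_dist (mixP p d d' \<delta>) i
      * grad_vec \<beta> p r d d' g (mix_mu p r d d' \<delta>) i) \<longlongrightarrow> ?D) ?F"
    unfolding grad_vec_def
    by (intro tendsto_intros tendsto_stat_dist_mixP[OF p_stoch irred, where d=d and d'=d']
      tendsto_mix_mu[OF p_stoch irred, where r=r and d=d and d'=d'])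
  have "eventually (\<lambda>\<delta>. \<delta> \<in> {0<..1}) ?F"
    by (auto simp: eventually_at_filter)
  then have "((\<lambda>\<delta>. (mix_ms \<beta> p r d d' \<delta> - J_ms \<beta> p r d) / \<delta>) \<longlongrightarrow> 0 + ?D) ?F"
    by (rule Lim_transform_eventually[OF tendsto_add[OF tendsto_mean_correction[OF p_stoch irred]
          grad_term] eventually_mono])
      (simp add: mix_ms_difference_quotient[OF p_stoch irred poisson])
  then show ?thesis
    unfolding has_field_derivative_iff mix_ms_0 diff_0_right add_0 grad_vec_def .
qed

end
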